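(* Let $d\ge 2$, $\varepsilon\in(0,1]$ and $\tau>0$. There is $c=c(\varepsilon,h,\tau)$ such that for all $0<t\le\tau$, $$\int_{\mathbb{R}}\tilde g^{(\varepsilon)}_t(x)\,dx\le c.$$ Moreover, for any $a>0$, $\lim_{t\to0^+}\int_{|x|>a}\tilde g^{(\varepsilon)}_t(x)\,dx=0$.
   Context: Let $\nu$ be a symmetric density of an infinite Lévy measure on $\mathbb{R}$ (with $\int(x^2\wedge1)\nu<\infty$), such that for some $\eta_4>0$, $\nu\in C^1(0,\eta_4)$, $\nu'<0$ and $-\nu'(x)/x$ decreasing on $(0,\eta_4)$. Let $\psi(\xi)=\int(1-\cos(\xi x))\nu(x)dx$ satisfy $\psi(\lambda\theta)\ge\underline{C}\lambda^\alpha\psi(\theta)$ for $\lambda\ge1,\theta\ge0$ and $\psi(\lambda\theta)\le\overline{C}\lambda^\beta\psi(\theta)$ for $\lambda\ge1,\theta\ge1$, with $0<\alpha\le\beta<2$. $h(r)=\int(1\wedge x^2r^{-2})\nu(x)dx$ for $r>0$ (continuous, strictly decreasing from $\infty$ to $0$), $h^{-1}$ its inverse. For $\varepsilon\in(0,1]$, $\tau>0$, $t>0$, $x\in\mathbb{R}$ define $\tilde g^{(\varepsilon)}_t(x)=\frac{1}{h^{-1}(1/t)}\wedge\frac{t\,h(|x|)}{|x|}$ if $|x|<\varepsilon$ (with $h(0)/0=\infty$), and $\tilde g^{(\varepsilon)}_t(x)=c_\varepsilon t^{(d+\beta-1)/\alpha}e^{-|x|}$ if $|x|\ge\varepsilon$,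 where $c_\varepsilon=\Big(\frac{1}{h^{-1}(1/\tau)}\wedge\frac{\tau h(\varepsilon)}{\varepsilon}\Big)\frac{e^{\varepsilon}}{\tau^{(d+\beta-1)/\alpha}}$. *)

theory Defs
  imports "HOL-Analysis.Analysis"
begin

definition levy_density :: "(real \<Rightarrow> real) \<Rightarrow> bool" where
  "levy_density \<nu> \<longleftrightarrow>
     \<nu> \<in> borel_measurable borel \<and> (\<forall>x. 0 \<le> \<nu> x) \<and> (\<forall>x. \<nu> (-x) = \<nu> x) \<and>
     integrable lborel (\<lambda>x. min (x\<^sup>2) 1 * \<nu> x) \<and>
     (\<integral>\<^sup>+ x. ennreal (\<nu> x) \<partial>lborel) = \<infinity>"

definition psi :: "(real \<Rightarrow> real) \<Rightarrow> real \<Rightarrow> real" where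
  "psi \<nu> \<xi> = (\<integral> x. (1 - cos (\<xi> * x)) * \<nu> x \<partial>lborel)"

definition hfun :: "(real \<Rightarrow> real) \<Rightarrow> real \<Rightarrow> real" where
  "hfun \<nu> r = (\<integral> x. min 1 (x\<^sup>2 / r\<^sup>2) * \<nu> x \<partial>lborel)"

definition hinv :: "(real \<Rightarrow> real) \<Rightarrow> real \<Rightarrow> real" where
  "hinv \<nu> s = (THE r. 0 < r \<and> hfun \<nu> r = s)"

text \<open>The function \<tilde>g^(\<epsilon>)_t(x), depending also on \<tau>, d, \<alpha>, \<beta>.
  At x = 0 the convention h(0)/0 = \<infinity> gives the value 1/h^{-1}(1/t).\<close>
definition gtilde ::
  "(real \<Rightarrow> real) \<Rightarrow> nat \<Rightarrow> real \<Rightarrow> real \<Rightarrow> real \<Rightarrow> real \<Rightarrow> real \<Rightarrow> real \<Rightarrow> real" where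
  "gtilde \<nu> d \<alpha> \<beta> \<tau> \<epsilon> t x =
     (if \<bar>x\<bar> < \<epsilon> then
        (if x = 0 then 1 / hinv \<nu> (1 / t)
         else min (1 / hinv \<nu> (1 / t)) (t * hfun \<nu> \<bar>x\<bar> / \<bar>x\<bar>))
      else
        (min (1 / hinv \<nu> (1 / \<tau>)) (\<tau> * hfun \<nu> \<epsilon> / \<epsilon>) * exp \<epsilon>
           / \<tau> powr ((real d + \<beta> - 1) / \<alpha>))
        * t powr ((real d + \<beta> - 1) / \<alpha>) * exp (- \<bar>x\<bar>))"

end

theory Submission
  imports Defs
begin

(* Write R = h^-1(1/t).  Near the origin g~_t is at most 1/R on |x| < R, and for R <= |x| < eps
   it is at most t h(|x|)/|x| <= (15/Cl^2) R^alpha |x|^(-1-alpha), because h inherits the lower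
   scaling of psi in the form h(x) <= (15/Cl^2) (r/x)^alpha h(r) for r <= x, and t h(R) = 1.
   Together with the exponential far part this gives integrals bounded uniformly in t.
   On {|x| > a} monotonicity of h gives g~_t <= t h(a)/a below eps, and the far part carries
   the factor t^((d+beta-1)/alpha), so the tail integrals vanish as t -> 0+.

   The scaling of h comes from comparing h(1/xi) with psi(xi): 1 - cos u <= 2 min(1, u^2)
   gives psi(xi) <= 2 h(1/xi), and averaging 1 - cos(s y) over s in [0, xi], whose mean
   1 - sin(xi y)/(xi y) is at least (2/15) min(1, (xi y)^2), bounds h(1/xi) by (15/2) times
   the supremum of psi on [0, xi]; the lower scaling controls that supremum by psi(xi)/Cl. *)

lemma one_minus_cos_le_min: "1 - cos (u::real) \<le> 2 * min 1 (u\<^sup>2)"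
proof -
  have "1 - cos u = 2 * (sin (u/2))\<^sup>2"
    using cos_double_sin[of "u/2"] by simp
  moreover have "(sin (u/2))\<^sup>2 \<le> 1"
    using abs_sin_le_one[of "u/2"] by (simp add: abs_square_le_1)
  moreover have "(sin (u/2))\<^sup>2 \<le> u\<^sup>2"
  proof -
    have "\<bar>sin (u/2)\<bar> \<le> \<bar>u\<bar>"
      using abs_sin_x_le_abs_x[of "u/2"] by simp
    then show ?thesis by (simp only: abs_le_square_iff)
  qed
  ultimately show ?thesis by simp
qed

lemma sin_le_Maclaurin5: "sin (u::real) \<le> u - u^3/6 + \<bar>u\<bar>^5/120"
proof -
  have "\<bar>sin u - (\<Sum>m<5. sin_coeff m * u ^ m)\<bar> \<le> inverse (fact 5) * \<bar>u\<bar> ^ 5"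
    by (rule Maclaurin_sin_bound)
  moreover have "(\<Sum>m<5. sin_coeff m * u ^ m) = u - u^3/6"
    by (simp add: lessThan_nat_numeral sin_coeff_def fact_numeral)
  ultimately show ?thesis by (simp add: fact_numeral) argo
qed

lemma sinc_le_one_minus_min:
  assumes "(u::real) \<noteq> 0"
  shows "sin u / u \<le> 1 - 2/15 * min 1 (u\<^sup>2)"
proof -
  have pos: "sin v / v \<le> 1 - 2/15 * min 1 (v\<^sup>2)" if "0 < v" for v :: real
  proof (cases "v \<le> 2")
    case True
    have "sin v / v \<le> (v - v^3/6 + v^5/120) / v"
      using sin_le_Maclaurin5[of v] that by (simp add: divide_right_mono)
    also have "\<dots> = 1 - v\<^sup>2/6 + v\<^sup>2 * v\<^sup>2/120"
      using that by (simp add: field_simps eval_nat_numeral)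
    also have "\<dots> \<le> 1 - 2/15 * v\<^sup>2"
    proof -
      have "v\<^sup>2 \<le> 4"
        using power_mono[of v 2 2] True that by simp
      then have "v\<^sup>2 * v\<^sup>2 \<le> 4 * v\<^sup>2" by (intro mult_right_mono) auto
      then show ?thesis by simp
    qed
    finally show ?thesis
      using min.cobounded2[of 1 "v\<^sup>2"] by linarith
  next
    case False
    then have "sin v * 2 \<le> v"
      using sin_le_one[of v] by linarith
    then have "sin v / v \<le> 1/2"
      using that by (simp add: field_simps)
    then show ?thesis by (simp add: min_def)
  qed
  show ?thesis
    using pos[of u] pos[of "-u"] assms by (cases "0 < u") auto
qed

lemma nn_integral_one_minus_cos_ge:
  assumes "0 < \<xi>"
  shows "ennreal (2/15 * \<xi> * min 1 ((\<xi> * y)\<^sup>2))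
    \<le> (\<integral>\<^sup>+s\<in>{0..\<xi>}. ennreal (1 - cos (s * y)) \<partial>lborel)"
proof (cases "y = 0")
  case True
  then show ?thesis by simp
next
  case False
  have "((\<lambda>s. 1 - cos (s * y)) has_integral (\<xi> - sin (\<xi> * y) / y) - (0 - sin (0 * y) / y)) {0..\<xi>}"
    using \<open>0 < \<xi>\<close> False
    by (intro fundamental_theorem_of_calculus)
       (auto intro!: derivative_eq_intros simp flip: has_real_derivative_iff_has_vector_derivative)
  then have "(\<integral>\<^sup>+s\<in>{0..\<xi>}. ennreal (1 - cos (s * y)) \<partial>lborel) = ennreal (\<xi> - sin (\<xi> * y) / y)"
    by (intro nn_integral_has_integral_lebesgue') auto
  moreover have "2/15 * \<xi> * min 1 ((\<xi> * y)\<^sup>2) \<le> \<xi> - sin (\<xi> * y) / y"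
  proof -
    have "\<xi> * (sin (\<xi> * y) / (\<xi> * y)) \<le> \<xi> * (1 - 2/15 * min 1 ((\<xi> * y)\<^sup>2))"
      using sinc_le_one_minus_min[of "\<xi> * y"] \<open>0 < \<xi>\<close> False by (intro mult_left_mono) auto
    moreover have "\<xi> * (sin (\<xi> * y) / (\<xi> * y)) = sin (\<xi> * y) / y"
      using \<open>0 < \<xi>\<close> by simp
    ultimately show ?thesis by (simp add: algebra_simps)
  qed
  ultimately show ?thesis by (simp add: ennreal_leI)
qed

lemma nn_integral_even_le:
  fixes f :: "real \<Rightarrow> ennreal"
  assumes [measurable]: "f \<in> borel_measurable borel"
  shows "(\<integral>\<^sup>+x. f \<bar>x\<bar> \<partial>lborel) \<le> 2 * (\<integral>\<^sup>+x. f x * indicator {0..} x \<partial>lborel)"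
proof -
  have "(\<integral>\<^sup>+x. f \<bar>x\<bar> \<partial>lborel)
      \<le> (\<integral>\<^sup>+x. f x * indicator {0..} x + f (-x) * indicator {0..} (-x) \<partial>lborel)"
    by (intro nn_integral_mono) (auto simp: indicator_def)
  also have "\<dots> = (\<integral>\<^sup>+x. f x * indicator {0..} x \<partial>lborel)
      + (\<integral>\<^sup>+x. f x * indicator {0..} x \<partial>distr lborel borel uminus)"
    by (subst nn_integral_add) (auto simp: nn_integral_distr)
  finally show ?thesis by (simp add: lborel_distr_uminus mult_2)
qed

lemma nn_integral_exp_neg_atLeast_0:
  "(\<integral>\<^sup>+y. ennreal (exp (- y)) * indicator {0..} y \<partial>lborel) = 1"
  using nn_integral_has_integral_lebesgue'[OF _ has_integral_exp_minus_to_infinity[of 1 0]]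
  by simp

lemma nn_integral_powr_atLeast:
  assumes "0 < R" "0 < a"
  shows "(\<integral>\<^sup>+y. ennreal (y powr (-1-a)) * indicator {R..} y \<partial>lborel) = ennreal (R powr (-a) / a)"
  using nn_integral_has_integral_lebesgue'[OF _ has_integral_powr_to_inf[of "-1-a" R]] assms
  by simp

lemma nn_integral_le_near_far_majorant:
  assumes R: "0 < R" and C: "0 \<le> C" and a: "0 < a" and K: "0 \<le> K"
    and f: "\<And>x. f x \<le> (if \<bar>x\<bar> < R then 1/R else C * R powr a * \<bar>x\<bar> powr (-1-a)) + K * exp (-\<bar>x\<bar>)"
  shows "(\<integral>\<^sup>+x. ennreal (f x) \<partial>lborel) \<le> ennreal (2 * (1 + C/a + K))"
proof -
  define \<phi> where "\<phi> y = (if y < R then 1/R else C * R powr a * y powr (-1-a)) + K * exp (-y)" for y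
  have "(\<integral>\<^sup>+x. ennreal (f x) \<partial>lborel) \<le> (\<integral>\<^sup>+x. ennreal (\<phi> \<bar>x\<bar>) \<partial>lborel)"
    using f by (intro nn_integral_mono ennreal_leI) (simp add: \<phi>_def)
  also have "\<dots> \<le> 2 * (\<integral>\<^sup>+y. ennreal (\<phi> y) * indicator {0..} y \<partial>lborel)"
    by (rule nn_integral_even_le) (simp add: \<phi>_def)
  also have "(\<integral>\<^sup>+y. ennreal (\<phi> y) * indicator {0..} y \<partial>lborel)
      = (\<integral>\<^sup>+y. ennreal (1/R) * indicator {0..<R} y
            + ennreal (C * R powr a) * (ennreal (y powr (-1-a)) * indicator {R..} y)
            + ennreal K * (ennreal (exp (-y)) * indicator {0..} y) \<partial>lborel)"
    using R C K
    by (intro nn_integral_cong, rename_tac y, case_tac "0 \<le> y"; case_tac "y < R")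
       (simp_all add: \<phi>_def ennreal_mult')
  also have "\<dots> = ennreal (1/R) * R + ennreal (C * R powr a) * ennreal (R powr (-a) / a) + ennreal K"
    using R a
    by (simp add: nn_integral_add nn_integral_cmult nn_integral_cmult_indicator
        nn_integral_powr_atLeast nn_integral_exp_neg_atLeast_0)
  also have "\<dots> = ennreal (1 + C/a + K)"
  proof -
    have "ennreal (C * R powr a) * ennreal (R powr (-a) / a) = ennreal (C/a)"
      using R C a by (simp add: ennreal_mult'[symmetric] powr_minus field_simps)
    then show ?thesis
      using R C a K by (simp add: ennreal_mult'[symmetric])
  qed
  finally have "(\<integral>\<^sup>+x. ennreal (f x) \<partial>lborel) \<le> 2 * ennreal (1 + C/a + K)"
    by (simp add: mult_left_mono)
  also have "\<dots> = ennreal (2 * (1 + C/a + K))"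
    using C a K by (subst ennreal_mult) auto
  finally show ?thesis .
qed

lemma nn_integral_tail_le_majorant:
  assumes c: "0 \<le> c" and \<epsilon>: "0 \<le> \<epsilon>" and K: "0 \<le> K"
    and f: "\<And>x. a < \<bar>x\<bar> \<Longrightarrow> f x \<le> (if \<bar>x\<bar> < \<epsilon> then c else 0) + K * exp (-\<bar>x\<bar>)"
  shows "(\<integral>\<^sup>+x\<in>{x. a < \<bar>x\<bar>}. ennreal (f x) \<partial>lborel) \<le> ennreal (2 * (c * \<epsilon> + K))"
proof -
  define \<phi> where "\<phi> y = (if y < \<epsilon> then c else 0) + K * exp (-y)" for y
  have "(\<integral>\<^sup>+x\<in>{x. a < \<bar>x\<bar>}. ennreal (f x) \<partial>lborel) \<le> (\<integral>\<^sup>+x. ennreal (\<phi> \<bar>x\<bar>) \<partial>lborel)"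
  proof (intro nn_integral_mono)
    fix x
    show "ennreal (f x) * indicator {x. a < \<bar>x\<bar>} x \<le> ennreal (\<phi> \<bar>x\<bar>)"
      using f[of x] by (cases "a < \<bar>x\<bar>") (auto simp: \<phi>_def intro!: ennreal_leI simp del: ennreal_plus)
  qed
  also have "\<dots> \<le> 2 * (\<integral>\<^sup>+y. ennreal (\<phi> y) * indicator {0..} y \<partial>lborel)"
    by (rule nn_integral_even_le) (simp add: \<phi>_def)
  also have "(\<integral>\<^sup>+y. ennreal (\<phi> y) * indicator {0..} y \<partial>lborel)
      = (\<integral>\<^sup>+y. ennreal c * indicator {0..<\<epsilon>} y + ennreal K * (ennreal (exp (-y)) * indicator {0..} y) \<partial>lborel)"
    using c K
    by (intro nn_integral_cong, rename_tac y, case_tac "0 \<le> y"; case_tac "y < \<epsilon>")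
       (simp_all add: \<phi>_def ennreal_mult')
  also have "\<dots> = ennreal c * \<epsilon> + ennreal K"
    using \<epsilon> by (simp add: nn_integral_add nn_integral_cmult nn_integral_cmult_indicator nn_integral_exp_neg_atLeast_0)
  also have "\<dots> = ennreal (c * \<epsilon> + K)"
    using c \<epsilon> K by (simp add: ennreal_plus[symmetric] ennreal_mult[symmetric] del: ennreal_plus)
  finally have "(\<integral>\<^sup>+x\<in>{x. a < \<bar>x\<bar>}. ennreal (f x) \<partial>lborel) \<le> 2 * ennreal (c * \<epsilon> + K)"
    by (simp add: mult_left_mono)
  also have "\<dots> = ennreal (2 * (c * \<epsilon> + K))"
    using c \<epsilon> K by (subst ennreal_mult) auto
  finally show ?thesis .
qed

lemma density_pos_of_deriv_neg:
  fixes \<nu> \<nu>' :: "real \<Rightarrow> real"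
  assumes nonneg: "\<And>x. 0 \<le> \<nu> x"
    and deriv: "\<forall>x\<in>{0<..<\<eta>}. (\<nu> has_real_derivative \<nu>' x) (at x) \<and> \<nu>' x < 0"
    and x: "0 < x" "x < \<eta>"
  shows "0 < \<nu> x"
proof -
  have "\<exists>D. (\<nu> has_real_derivative D) (at z) \<and> D < 0" if "x \<le> z" "z \<le> (x + \<eta>) / 2" for z
    using deriv x that by force
  then have "\<nu> ((x + \<eta>) / 2) < \<nu> x"
    using DERIV_neg_imp_decreasing[of x "(x + \<eta>) / 2" \<nu>] x by auto
  then show ?thesis
    using nonneg[of "(x + \<eta>) / 2"] by simp
qed

section \<open>The functions h and psi\<close>

locale levy_measure_density =
  fixes \<nu> :: "real \<Rightarrow> real"
  assumes measurable_density [measurable]: "\<nu> \<in> borel_measurable borel"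
    and density_nonneg: "\<And>x. 0 \<le> \<nu> x"
    and integrable_min_square: "integrable lborel (\<lambda>x. min (x\<^sup>2) 1 * \<nu> x)"
begin

lemma integrable_hfun_integrand: "integrable lborel (\<lambda>x. min 1 (x\<^sup>2 / r\<^sup>2) * \<nu> x)"
proof (rule Bochner_Integration.integrable_bound)
  show "integrable lborel (\<lambda>x. max 1 (1/r\<^sup>2) * (min (x\<^sup>2) 1 * \<nu> x))"
    using integrable_min_square by simp
  have "min 1 (x\<^sup>2 / r\<^sup>2) \<le> max 1 (1/r\<^sup>2) * min (x\<^sup>2) 1" for x
  proof (cases "x\<^sup>2 \<le> 1")
    case True
    have "x\<^sup>2 / r\<^sup>2 \<le> max 1 (1/r\<^sup>2) * x\<^sup>2"
      using mult_right_mono[of "1/r\<^sup>2" "max 1 (1/r\<^sup>2)" "x\<^sup>2"] by simp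
    then show ?thesis using True by (simp add: min_def)
  qed (simp add: min_def max_def)
  then show "AE x in lborel. norm (min 1 (x\<^sup>2 / r\<^sup>2) * \<nu> x) \<le> norm (max 1 (1/r\<^sup>2) * (min (x\<^sup>2) 1 * \<nu> x))"
    using density_nonneg by (intro AE_I2) (simp add: abs_mult mult_right_mono flip: mult.assoc)
qed simp

lemma hfun_nonneg: "0 \<le> hfun \<nu> r"
  unfolding hfun_def by (intro integral_nonneg_AE AE_I2) (simp add: density_nonneg)

lemma hfun_integrand_ratio_le:
  fixes r r' x :: real
  assumes "0 < r" "0 < r'"
  shows "min 1 ((r/r')\<^sup>2) * min 1 (x\<^sup>2 / r\<^sup>2) \<le> min 1 (x\<^sup>2 / r'\<^sup>2)"
proof -
  let ?q = "min 1 ((r/r')\<^sup>2)"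
  have "?q * (x\<^sup>2 / r\<^sup>2) \<le> (r/r')\<^sup>2 * (x\<^sup>2 / r\<^sup>2)"
    using min.cobounded2[of 1 "(r/r')\<^sup>2"] by (rule mult_right_mono) simp
  also have "\<dots> = x\<^sup>2 / r'\<^sup>2"
    using assms by (simp add: field_simps)
  finally have "min (?q * 1) (?q * (x\<^sup>2 / r\<^sup>2)) \<le> min 1 (x\<^sup>2 / r'\<^sup>2)"
    by (intro min.mono) auto
  then show ?thesis
    by (simp add: min_mult_distrib_left)
qed

lemma hfun_ge_ratio:
  assumes "0 < r" "0 < r'"
  shows "min 1 ((r/r')\<^sup>2) * hfun \<nu> r \<le> hfun \<nu> r'"
  unfolding hfun_def
  by (subst integral_mult_right_zero[symmetric])
     (intro integral_mono integrable_hfun_integrand integrable_mult_right,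
      use hfun_integrand_ratio_le[OF assms] density_nonneg in \<open>simp add: mult_right_mono flip: mult.assoc\<close>)

lemma hfun_antimono:
  assumes "0 < r" "r \<le> r'"
  shows "hfun \<nu> r' \<le> hfun \<nu> r"
  using hfun_ge_ratio[of r' r] assms by simp

lemma isCont_hfun:
  assumes "0 < r"
  shows "isCont (hfun \<nu>) r"
  unfolding isCont_def
proof (rule tendsto_sandwich)
  have "\<forall>\<^sub>F r' in at r. 0 < r'"
    using eventually_at_in_open'[of "{0<..}" r] assms by simp
  then show "\<forall>\<^sub>F r' in at r. min 1 ((r/r')\<^sup>2) * hfun \<nu> r \<le> hfun \<nu> r'"
    "\<forall>\<^sub>F r' in at r. hfun \<nu> r' \<le> hfun \<nu> r / min 1 ((r'/r)\<^sup>2)"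
    using assms hfun_ge_ratio by (auto elim!: eventually_mono simp: field_simps)
  show "((\<lambda>r'. min 1 ((r/r')\<^sup>2) * hfun \<nu> r) \<longlongrightarrow> hfun \<nu> r) (at r)"
    "((\<lambda>r'. hfun \<nu> r / min 1 ((r'/r)\<^sup>2)) \<longlongrightarrow> hfun \<nu> r) (at r)"
    using assms by (auto intro!: tendsto_eq_intros)
qed

lemma psi_integrand_le: "(1 - cos (\<xi> * x)) * \<nu> x \<le> 2 * (min 1 (x\<^sup>2 / (1/\<xi>)\<^sup>2) * \<nu> x)"
proof -
  have "x\<^sup>2 / (1/\<xi>)\<^sup>2 = (\<xi> * x)\<^sup>2"
    by (simp add: power_mult_distrib power_one_over)
  then show ?thesis
    using one_minus_cos_le_min[of "\<xi> * x"] density_nonneg[of x]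
    by (simp add: mult_right_mono flip: mult.assoc)
qed

lemma integrable_psi_integrand: "integrable lborel (\<lambda>x. (1 - cos (\<xi> * x)) * \<nu> x)"
proof (rule Bochner_Integration.integrable_bound)
  show "integrable lborel (\<lambda>x. 2 * (min 1 (x\<^sup>2 / (1/\<xi>)\<^sup>2) * \<nu> x))"
    by (intro integrable_mult_right integrable_hfun_integrand)
  have "0 \<le> (1 - cos (\<xi> * x)) * \<nu> x" for x
    by (simp add: density_nonneg)
  then show "AE x in lborel. norm ((1 - cos (\<xi> * x)) * \<nu> x) \<le> norm (2 * (min 1 (x\<^sup>2 / (1/\<xi>)\<^sup>2) * \<nu> x))"
    using psi_integrand_le by (intro AE_I2) (metis abs_ge_self abs_of_nonneg order_trans real_norm_def)
qed simp

lemma psi_nonneg: "0 \<le> psi \<nu> \<xi>"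
  unfolding psi_def by (intro integral_nonneg_AE AE_I2) (simp add: density_nonneg)

lemma psi_le_hfun: "psi \<nu> \<xi> \<le> 2 * hfun \<nu> (1/\<xi>)"
  unfolding psi_def hfun_def
  by (subst integral_mult_right_zero[symmetric])
     (intro integral_mono integrable_psi_integrand integrable_mult_right integrable_hfun_integrand psi_integrand_le)

lemma nn_integral_psi_interval:
  "(\<integral>\<^sup>+s\<in>{0..\<xi>}. ennreal (psi \<nu> s) \<partial>lborel)
    = (\<integral>\<^sup>+y. (\<integral>\<^sup>+s\<in>{0..\<xi>}. ennreal (1 - cos (s * y)) \<partial>lborel) * ennreal (\<nu> y) \<partial>lborel)"
proof -
  have psi_eq: "ennreal (psi \<nu> s) = (\<integral>\<^sup>+y. ennreal ((1 - cos (s * y)) * \<nu> y) \<partial>lborel)" for s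
    unfolding psi_def
    by (rule nn_integral_eq_integral[OF integrable_psi_integrand, symmetric]) (simp add: density_nonneg)
  have "(\<integral>\<^sup>+s\<in>{0..\<xi>}. ennreal (psi \<nu> s) \<partial>lborel)
      = (\<integral>\<^sup>+s. (\<integral>\<^sup>+y. ennreal ((1 - cos (s * y)) * \<nu> y) * indicator {0..\<xi>} s \<partial>lborel) \<partial>lborel)"
    by (simp add: psi_eq nn_integral_multc)
  also have "\<dots> = (\<integral>\<^sup>+y. (\<integral>\<^sup>+s. ennreal ((1 - cos (s * y)) * \<nu> y) * indicator {0..\<xi>} s \<partial>lborel) \<partial>lborel)"
    by (rule lborel_pair.Fubini') measurable
  also have "\<dots> = (\<integral>\<^sup>+y. (\<integral>\<^sup>+s\<in>{0..\<xi>}. ennreal (1 - cos (s * y)) \<partial>lborel) * ennreal (\<nu> y) \<partial>lborel)"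
  proof (intro nn_integral_cong)
    fix y
    have "ennreal ((1 - cos (s * y)) * \<nu> y) * indicator {0..\<xi>} s
        = ennreal (1 - cos (s * y)) * indicator {0..\<xi>} s * ennreal (\<nu> y)" for s
      by (simp add: ennreal_mult density_nonneg mult_ac)
    then show "(\<integral>\<^sup>+s. ennreal ((1 - cos (s * y)) * \<nu> y) * indicator {0..\<xi>} s \<partial>lborel)
        = (\<integral>\<^sup>+s\<in>{0..\<xi>}. ennreal (1 - cos (s * y)) \<partial>lborel) * ennreal (\<nu> y)"
      by (simp add: nn_integral_multc)
  qed
  finally show ?thesis .
qed

lemma hfun_le_psi_sup:
  assumes "0 < \<xi>" and P: "\<And>s. 0 \<le> s \<Longrightarrow> s \<le> \<xi> \<Longrightarrow> psi \<nu> s \<le> P"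
  shows "2/15 * hfun \<nu> (1/\<xi>) \<le> P"
proof -
  have "0 \<le> P" using P[of 0] psi_nonneg[of 0] assms(1) by simp
  have scaled: "min 1 (y\<^sup>2 / (1/\<xi>)\<^sup>2) = min 1 ((\<xi> * y)\<^sup>2)" for y
    by (simp add: power_mult_distrib power_one_over mult.commute)
  have "2/15 * \<xi> * hfun \<nu> (1/\<xi>) = (\<integral>y. 2/15 * \<xi> * (min 1 ((\<xi> * y)\<^sup>2) * \<nu> y) \<partial>lborel)"
    unfolding hfun_def scaled by (rule integral_mult_right_zero[symmetric])
  then have "ennreal (2/15 * \<xi> * hfun \<nu> (1/\<xi>))
      = (\<integral>\<^sup>+y. ennreal (2/15 * \<xi> * (min 1 ((\<xi> * y)\<^sup>2) * \<nu> y)) \<partial>lborel)"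
    using integrable_hfun_integrand[of "1/\<xi>"] assms(1)
    by (simp add: nn_integral_eq_integral integrable_mult_right scaled density_nonneg)
  also have "\<dots> \<le> (\<integral>\<^sup>+y. (\<integral>\<^sup>+s\<in>{0..\<xi>}. ennreal (1 - cos (s * y)) \<partial>lborel) * ennreal (\<nu> y) \<partial>lborel)"
  proof (intro nn_integral_mono)
    fix y
    have "ennreal (2/15 * \<xi> * (min 1 ((\<xi> * y)\<^sup>2) * \<nu> y))
        = ennreal (2/15 * \<xi> * min 1 ((\<xi> * y)\<^sup>2)) * ennreal (\<nu> y)"
      using density_nonneg[of y] by (subst ennreal_mult''[symmetric]) (simp_all add: mult.assoc)
    also have "\<dots> \<le> (\<integral>\<^sup>+s\<in>{0..\<xi>}. ennreal (1 - cos (s * y)) \<partial>lborel) * ennreal (\<nu> y)"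
      using assms(1) by (intro mult_right_mono nn_integral_one_minus_cos_ge) auto
    finally show "ennreal (2/15 * \<xi> * (min 1 ((\<xi> * y)\<^sup>2) * \<nu> y))
        \<le> (\<integral>\<^sup>+s\<in>{0..\<xi>}. ennreal (1 - cos (s * y)) \<partial>lborel) * ennreal (\<nu> y)" .
  qed
  also have "\<dots> = (\<integral>\<^sup>+s\<in>{0..\<xi>}. ennreal (psi \<nu> s) \<partial>lborel)"
    by (rule nn_integral_psi_interval[symmetric])
  also have "\<dots> \<le> (\<integral>\<^sup>+s\<in>{0..\<xi>}. ennreal P \<partial>lborel)"
    by (intro nn_integral_mono) (auto simp: indicator_def P ennreal_leI)
  also have "\<dots> = ennreal (\<xi> * P)"
    using assms(1) \<open>0 \<le> P\<close> by (simp add: nn_integral_cmult_indicator ennreal_mult' mult.commute)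
  finally have "2/15 * \<xi> * hfun \<nu> (1/\<xi>) \<le> \<xi> * P"
    using assms(1) \<open>0 \<le> P\<close> by (subst (asm) ennreal_le_iff) auto
  then show ?thesis using assms(1) by simp
qed

end

section \<open>Lower scaling of psi\<close>

(* Positivity of nu near 0 is all that remains of the assumption nu' < 0: it makes h strictly
   decreasing, so that hinv really inverts h. *)
locale levy_lower_scaling = levy_measure_density +
  fixes Cl \<alpha> \<eta> :: real
  assumes Cl_pos: "0 < Cl" and alpha_pos: "0 < \<alpha>" and eta_pos: "0 < \<eta>"
    and density_pos_near_0: "\<And>x. 0 < x \<Longrightarrow> x < \<eta> \<Longrightarrow> 0 < \<nu> x"
    and psi_lower_scaling:
      "\<And>lam \<theta>. 1 \<le> lam \<Longrightarrow> 0 \<le> \<theta> \<Longrightarrow> psi \<nu> (lam * \<theta>) \<ge> Cl * lam powr \<alpha> * psi \<nu> \<theta>"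
begin

lemma psi_almost_increasing:
  assumes "0 \<le> s" "s \<le> \<xi>"
  shows "Cl * psi \<nu> s \<le> psi \<nu> \<xi>"
proof (cases "s = 0")
  case True
  then show ?thesis
    using psi_nonneg[of \<xi>] by (simp add: psi_def)
next
  case False
  then have "0 < s" "1 \<le> \<xi> / s"
    using assms by auto
  have "Cl * psi \<nu> s \<le> Cl * (\<xi> / s) powr \<alpha> * psi \<nu> s"
    using \<open>1 \<le> \<xi> / s\<close> alpha_pos Cl_pos psi_nonneg[of s]
    by (simp add: ge_one_powr_ge_zero mult_right_mono)
  also have "\<dots> \<le> psi \<nu> (\<xi> / s * s)"
    using \<open>1 \<le> \<xi> / s\<close> assms(1) by (rule psi_lower_scaling)
  finally show ?thesis
    using \<open>0 < s\<close> by simp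
qed

lemma hfun_le_psi:
  assumes "0 < \<xi>"
  shows "hfun \<nu> (1/\<xi>) \<le> 15 / (2 * Cl) * psi \<nu> \<xi>"
proof -
  have "2/15 * hfun \<nu> (1/\<xi>) \<le> psi \<nu> \<xi> / Cl"
    using assms psi_almost_increasing Cl_pos
    by (intro hfun_le_psi_sup) (simp_all add: field_simps)
  then show ?thesis
    using Cl_pos by (simp add: field_simps)
qed

lemma hfun_scaling:
  assumes "0 < r" "r \<le> x"
  shows "hfun \<nu> x \<le> 15 / Cl\<^sup>2 * (r/x) powr \<alpha> * hfun \<nu> r"
proof -
  have "0 < x" "1 \<le> x / r"
    using assms by auto
  have "Cl * (x/r) powr \<alpha> * psi \<nu> (1/x) \<le> psi \<nu> (x/r * (1/x))"
    using \<open>1 \<le> x / r\<close> by (rule psi_lower_scaling) (use \<open>0 < x\<close> in simp)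
  also have "\<dots> \<le> 2 * hfun \<nu> r"
    using psi_le_hfun[of "x/r * (1/x)"] \<open>0 < x\<close> by simp
  finally have "psi \<nu> (1/x) \<le> 2 * (r/x) powr \<alpha> * hfun \<nu> r / Cl"
    using Cl_pos assms \<open>0 < x\<close> by (simp add: field_simps powr_divide)
  have "hfun \<nu> x \<le> 15 / (2 * Cl) * psi \<nu> (1/x)"
    using hfun_le_psi[of "1/x"] \<open>0 < x\<close> by simp
  also have "\<dots> \<le> 15 / (2 * Cl) * (2 * (r/x) powr \<alpha> * hfun \<nu> r / Cl)"
    using \<open>psi \<nu> (1/x) \<le> _\<close> Cl_pos by (intro mult_left_mono) auto
  also have "\<dots> = 15 / Cl\<^sup>2 * (r/x) powr \<alpha> * hfun \<nu> r"
    using Cl_pos by (simp add: field_simps power2_eq_square)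
  finally show ?thesis .
qed

lemma hfun_strict_antimono:
  assumes "0 < r" "r < r'"
  shows "hfun \<nu> r' < hfun \<nu> r"
proof -
  define g where "g x = (min 1 (x\<^sup>2 / r\<^sup>2) - min 1 (x\<^sup>2 / r'\<^sup>2)) * \<nu> x" for x
  have "1 \<le> (r'/r)\<^sup>2"
    using assms by (simp add: one_le_power)
  then have g_nonneg: "0 \<le> g x" for x
    using hfun_integrand_ratio_le[of r' r x] assms density_nonneg[of x] by (simp add: g_def)
  have g_pos: "0 < g x" if "0 < x" "x < min r \<eta>" for x
  proof -
    have "x\<^sup>2 / r'\<^sup>2 < x\<^sup>2 / r\<^sup>2" "x\<^sup>2 / r\<^sup>2 < 1"
      using assms that by (auto simp: field_simps intro!: power_strict_mono)
    then show ?thesis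
      using density_pos_near_0[of x] that by (simp add: g_def)
  qed
  have integrable_g: "integrable lborel g"
    unfolding g_def left_diff_distrib by (intro Bochner_Integration.integrable_diff integrable_hfun_integrand)
  have integral_g: "integral\<^sup>L lborel g = hfun \<nu> r - hfun \<nu> r'"
    unfolding g_def hfun_def left_diff_distrib by (intro Bochner_Integration.integral_diff integrable_hfun_integrand)
  have "integral\<^sup>L lborel g \<noteq> 0"
  proof
    assume "integral\<^sup>L lborel g = 0"
    then have "AE x in lborel. g x = 0"
      using integral_nonneg_eq_0_iff_AE[OF integrable_g] g_nonneg by simp
    then have "AE x in lborel. x \<notin> {0<..<min r \<eta>}"
      by eventually_elim (use g_pos in force)
    then have "emeasure lborel {0<..<min r \<eta>} = 0"
      by (subst (asm) AE_iff_measurable[of "{0<..<min r \<eta>}"]) auto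
    then show False
      using assms eta_pos by simp
  qed
  moreover have "0 \<le> integral\<^sup>L lborel g"
    by (intro integral_nonneg_AE AE_I2 g_nonneg)
  ultimately show ?thesis
    using integral_g by linarith
qed

lemma hfun_pos: "0 < r \<Longrightarrow> 0 < hfun \<nu> r"
  using hfun_strict_antimono[of r "r + 1"] hfun_nonneg[of "r + 1"] by simp

lemma hfun_tendsto_0_at_top: "(hfun \<nu> \<longlongrightarrow> 0) at_top"
proof (rule tendsto_sandwich)
  show "\<forall>\<^sub>F x in at_top. 0 \<le> hfun \<nu> x"
    by (simp add: hfun_nonneg)
  show "\<forall>\<^sub>F x in at_top. hfun \<nu> x \<le> 15 / Cl\<^sup>2 * hfun \<nu> 1 * x powr (-\<alpha>)"
    using eventually_ge_at_top[of 1]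
    by eventually_elim (use hfun_scaling[of 1] in \<open>simp add: powr_divide powr_minus_divide mult_ac\<close>)
  have "((\<lambda>x. x powr (-\<alpha>)) \<longlongrightarrow> 0) at_top"
    using alpha_pos by (intro tendsto_neg_powr filterlim_ident) auto
  from tendsto_mult[OF tendsto_const this, of "15 / Cl\<^sup>2 * hfun \<nu> 1"]
  show "((\<lambda>x. 15 / Cl\<^sup>2 * hfun \<nu> 1 * x powr (-\<alpha>)) \<longlongrightarrow> 0) at_top"
    by simp
qed simp

lemma hfun_tendsto_at_top_at_right_0: "filterlim (hfun \<nu>) at_top (at_right 0)"
proof (rule filterlim_at_top_mono)
  have pos: "\<forall>\<^sub>F r in at_right 0. 0 < (r::real)"
    by (rule eventually_at_right_less)
  then have "((\<lambda>r. r powr \<alpha>) \<longlongrightarrow> 0) (at_right 0)"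
    using alpha_pos by (intro tendsto_zero_powrI[of "\<lambda>r. r"] tendsto_ident_at) (auto elim: eventually_mono)
  then have "LIM r at_right 0. inverse (r powr \<alpha>) :> at_top"
    using pos by (rule filterlim_inverse_at_top[OF _ eventually_mono]) simp
  then show "LIM r at_right 0. Cl\<^sup>2 / 15 * hfun \<nu> 1 * inverse (r powr \<alpha>) :> at_top"
    using Cl_pos hfun_pos[of 1] by (intro filterlim_tendsto_pos_mult_at_top[OF tendsto_const]) auto
  show "\<forall>\<^sub>F r in at_right 0. Cl\<^sup>2 / 15 * hfun \<nu> 1 * inverse (r powr \<alpha>) \<le> hfun \<nu> r"
    using eventually_at_right_real[OF zero_less_one]
  proof eventually_elim
    case (elim r)
    then have "hfun \<nu> 1 \<le> 15 / Cl\<^sup>2 * r powr \<alpha> * hfun \<nu> r"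
      using hfun_scaling[of r 1] by simp
    then show ?case
      using Cl_pos elim by (simp add: field_simps)
  qed
qed

lemma hfun_surj:
  assumes "0 < s"
  shows "\<exists>r>0. hfun \<nu> r = s"
proof -
  obtain x where x: "1 \<le> x" "hfun \<nu> x \<le> s"
    using eventually_conj[OF order_tendstoD(2)[OF hfun_tendsto_0_at_top assms] eventually_ge_at_top[of 1]]
    by (auto simp: eventually_at_top_linorder intro: less_imp_le)
  have "\<forall>\<^sub>F r in at_right 0. s \<le> hfun \<nu> r \<and> r \<in> {0<..<x}"
    using hfun_tendsto_at_top_at_right_0 x
    by (intro eventually_conj eventually_at_right_real) (auto simp: filterlim_at_top)
  then obtain r where r: "s \<le> hfun \<nu> r" "0 < r" "r < x"
    using eventually_happens'[of "at_right (0::real)"] by auto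
  have "continuous_on {r..x} (hfun \<nu>)"
    using r by (intro continuous_at_imp_continuous_on ballI isCont_hfun) auto
  then obtain q where "r \<le> q" "hfun \<nu> q = s"
    using IVT2'[of "hfun \<nu>" x s r] r x by auto
  then show ?thesis
    using r by (intro exI[of _ q]) auto
qed

lemma hinv_hfun:
  assumes "0 < r"
  shows "hinv \<nu> (hfun \<nu> r) = r"
  unfolding hinv_def
proof (rule the_equality)
  show "\<And>q. 0 < q \<and> hfun \<nu> q = hfun \<nu> r \<Longrightarrow> q = r"
    using assms hfun_strict_antimono by (metis linorder_neqE_linordered_idom less_irrefl)
qed (use assms in simp)

lemma
  assumes "0 < s"
  shows hinv_pos: "0 < hinv \<nu> s" and hfun_hinv: "hfun \<nu> (hinv \<nu> s) = s"
  using hfun_surj[OF assms] hinv_hfun by auto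

end

section \<open>Integrals of gtilde\<close>

lemma gtilde_near_le:
  assumes "\<bar>x\<bar> < \<epsilon>"
  shows "gtilde \<nu> d \<alpha> \<beta> \<tau> \<epsilon> t x \<le> 1 / hinv \<nu> (1 / t)"
  using assms by (simp add: gtilde_def)

lemma gtilde_near_le_hfun:
  assumes "\<bar>x\<bar> < \<epsilon>" "x \<noteq> 0"
  shows "gtilde \<nu> d \<alpha> \<beta> \<tau> \<epsilon> t x \<le> t * hfun \<nu> \<bar>x\<bar> / \<bar>x\<bar>"
  using assms by (simp add: gtilde_def)

lemma gtilde_far:
  assumes "\<epsilon> \<le> \<bar>x\<bar>"
  shows "gtilde \<nu> d \<alpha> \<beta> \<tau> \<epsilon> t x
    = (min (1 / hinv \<nu> (1 / \<tau>)) (\<tau> * hfun \<nu> \<epsilon> / \<epsilon>) * exp \<epsilon> / \<tau> powr ((real d + \<beta> - 1) / \<alpha>))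
      * t powr ((real d + \<beta> - 1) / \<alpha>) * exp (- \<bar>x\<bar>)"
  using assms by (simp add: gtilde_def)

context levy_measure_density
begin

lemma gtilde_tail_tendsto_0:
  assumes p: "0 < (real d + \<beta> - 1) / \<alpha>" and a: "0 < a" and \<epsilon>: "0 < \<epsilon>"
  shows "((\<lambda>t. \<integral>\<^sup>+x\<in>{x. a < \<bar>x\<bar>}. ennreal (gtilde \<nu> d \<alpha> \<beta> \<tau> \<epsilon> t x) \<partial>lborel) \<longlongrightarrow> 0) (at_right 0)"
proof -
  define p where "p = (real d + \<beta> - 1) / \<alpha>"
  define K0 where "K0 = min (1 / hinv \<nu> (1 / \<tau>)) (\<tau> * hfun \<nu> \<epsilon> / \<epsilon>) * exp \<epsilon> / \<tau> powr p"
  define K where "K = \<bar>K0\<bar>"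
  define B where "B t = ennreal (2 * (t * (hfun \<nu> a / a) * \<epsilon> + K * t powr p))" for t
  have bound: "(\<integral>\<^sup>+x\<in>{x. a < \<bar>x\<bar>}. ennreal (gtilde \<nu> d \<alpha> \<beta> \<tau> \<epsilon> t x) \<partial>lborel) \<le> B t"
    if t: "0 < t" for t
    unfolding B_def
  proof (rule nn_integral_tail_le_majorant)
    fix x assume ax: "a < \<bar>x\<bar>"
    show "gtilde \<nu> d \<alpha> \<beta> \<tau> \<epsilon> t x
      \<le> (if \<bar>x\<bar> < \<epsilon> then t * (hfun \<nu> a / a) else 0) + K * t powr p * exp (- \<bar>x\<bar>)"
    proof (cases "\<bar>x\<bar> < \<epsilon>")
      case True
      have "gtilde \<nu> d \<alpha> \<beta> \<tau> \<epsilon> t x \<le> t * hfun \<nu> \<bar>x\<bar> / \<bar>x\<bar>"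
        using True ax a by (intro gtilde_near_le_hfun) auto
      also have "\<dots> \<le> t * hfun \<nu> a / \<bar>x\<bar>"
        using t a ax by (intro divide_right_mono mult_left_mono hfun_antimono) auto
      also have "\<dots> \<le> t * hfun \<nu> a / a"
        using t a ax hfun_nonneg[of a] by (intro divide_left_mono) auto
      moreover have "0 \<le> K * t powr p * exp (- \<bar>x\<bar>)"
        by (simp add: K_def)
      ultimately show ?thesis
        using True by simp
    next
      case False
      then have "gtilde \<nu> d \<alpha> \<beta> \<tau> \<epsilon> t x = K0 * (t powr p * exp (- \<bar>x\<bar>))"
        by (simp add: gtilde_far K0_def p_def mult.assoc)
      also have "\<dots> \<le> K * (t powr p * exp (- \<bar>x\<bar>))"
        unfolding K_def by (intro mult_right_mono) auto
      finally show ?thesis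
        using False by (simp add: mult.assoc)
    qed
  qed (use t a hfun_nonneg[of a] \<epsilon> in \<open>auto simp: K_def\<close>)
  have "(B \<longlongrightarrow> ennreal (2 * (0 * (hfun \<nu> a / a) * \<epsilon> + K * 0))) (at_right 0)"
    unfolding B_def using p
    by (intro tendsto_ennrealI tendsto_intros tendsto_zero_powrI[of "\<lambda>t. t"])
       (auto simp: p_def intro: eventually_at_rightI[of 0 1] tendsto_ident_at)
  then have B0: "(B \<longlongrightarrow> 0) (at_right 0)"
    by simp
  have upper: "\<forall>\<^sub>F t in at_right 0.
      (\<integral>\<^sup>+x\<in>{x. a < \<bar>x\<bar>}. ennreal (gtilde \<nu> d \<alpha> \<beta> \<tau> \<epsilon> t x) \<partial>lborel) \<le> B t"
    using eventually_at_right_less[of "0::real"] by eventually_elim (rule bound)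
  show ?thesis
    by (rule tendsto_sandwich[OF _ upper tendsto_const B0]) simp
qed

end

context levy_lower_scaling
begin

lemma gtilde_le_near_far_majorant:
  fixes d :: nat and \<beta> \<tau> \<epsilon> t x :: real
  assumes t: "0 < t" "t \<le> \<tau>" and p: "0 \<le> (real d + \<beta> - 1) / \<alpha>"
  defines "R \<equiv> hinv \<nu> (1 / t)"
    and "K \<equiv> \<bar>min (1 / hinv \<nu> (1 / \<tau>)) (\<tau> * hfun \<nu> \<epsilon> / \<epsilon>) * exp \<epsilon>
          / \<tau> powr ((real d + \<beta> - 1) / \<alpha>)\<bar> * \<tau> powr ((real d + \<beta> - 1) / \<alpha>)"
  shows "gtilde \<nu> d \<alpha> \<beta> \<tau> \<epsilon> t x
    \<le> (if \<bar>x\<bar> < R then 1/R else 15 / Cl\<^sup>2 * R powr \<alpha> * \<bar>x\<bar> powr (-1-\<alpha>)) + K * exp (- \<bar>x\<bar>)"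
proof -
  define p where "p = (real d + \<beta> - 1) / \<alpha>"
  define K0 where "K0 = min (1 / hinv \<nu> (1 / \<tau>)) (\<tau> * hfun \<nu> \<epsilon> / \<epsilon>) * exp \<epsilon> / \<tau> powr p"
  have R: "0 < R" "hfun \<nu> R = 1/t"
    using hinv_pos[of "1/t"] hfun_hinv[of "1/t"] t by (simp_all add: R_def)
  have near_nonneg: "0 \<le> (if \<bar>x\<bar> < R then 1/R else 15 / Cl\<^sup>2 * R powr \<alpha> * \<bar>x\<bar> powr (-1-\<alpha>))"
    using R by simp
  have far_nonneg: "0 \<le> K * exp (- \<bar>x\<bar>)"
    by (simp add: K_def)
  consider "\<epsilon> \<le> \<bar>x\<bar>" | "\<bar>x\<bar> < \<epsilon>" "\<bar>x\<bar> < R" | "\<bar>x\<bar> < \<epsilon>" "R \<le> \<bar>x\<bar>"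
    by linarith
  then show ?thesis
  proof cases
    case 1
    have "gtilde \<nu> d \<alpha> \<beta> \<tau> \<epsilon> t x = K0 * t powr p * exp (- \<bar>x\<bar>)"
      using 1 by (simp add: gtilde_far K0_def p_def)
    also have "\<dots> \<le> \<bar>K0\<bar> * \<tau> powr p * exp (- \<bar>x\<bar>)"
      using t p by (intro mult_right_mono mult_mono powr_mono2) (auto simp: p_def)
    also have "\<dots> = K * exp (- \<bar>x\<bar>)"
      by (simp add: K_def K0_def p_def)
    finally show ?thesis
      using near_nonneg by linarith
  next
    case 2
    then show ?thesis
      using gtilde_near_le[of x \<epsilon> \<nu> d \<alpha> \<beta> \<tau> t] far_nonneg by (simp add: R_def)
  next
    case 3
    then have "0 < \<bar>x\<bar>"
      using R by linarith
    have "gtilde \<nu> d \<alpha> \<beta> \<tau> \<epsilon> t x \<le> t * hfun \<nu> \<bar>x\<bar> / \<bar>x\<bar>"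
      using 3 \<open>0 < \<bar>x\<bar>\<close> by (intro gtilde_near_le_hfun) auto
    also have "\<dots> \<le> t * (15 / Cl\<^sup>2 * (R / \<bar>x\<bar>) powr \<alpha> * hfun \<nu> R) / \<bar>x\<bar>"
      using 3 R t \<open>0 < \<bar>x\<bar>\<close> by (intro divide_right_mono mult_left_mono hfun_scaling) auto
    also have "\<dots> = 15 / Cl\<^sup>2 * R powr \<alpha> * \<bar>x\<bar> powr (-1-\<alpha>)"
      using t R \<open>0 < \<bar>x\<bar>\<close> by (simp add: powr_divide powr_diff powr_minus field_simps)
    finally show ?thesis
      using 3 far_nonneg by simp
  qed
qed

lemma gtilde_nn_integral_bounded:
  assumes "0 \<le> (real d + \<beta> - 1) / \<alpha>"
  shows "\<exists>c. \<forall>t. 0 < t \<and> t \<le> \<tau> \<longrightarrow>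
    (\<integral>\<^sup>+x. ennreal (gtilde \<nu> d \<alpha> \<beta> \<tau> \<epsilon> t x) \<partial>lborel) \<le> ennreal c"
proof -
  define K where "K = \<bar>min (1 / hinv \<nu> (1 / \<tau>)) (\<tau> * hfun \<nu> \<epsilon> / \<epsilon>) * exp \<epsilon>
          / \<tau> powr ((real d + \<beta> - 1) / \<alpha>)\<bar> * \<tau> powr ((real d + \<beta> - 1) / \<alpha>)"
  have "(\<integral>\<^sup>+x. ennreal (gtilde \<nu> d \<alpha> \<beta> \<tau> \<epsilon> t x) \<partial>lborel) \<le> ennreal (2 * (1 + 15 / Cl\<^sup>2 / \<alpha> + K))"
    if "0 < t" "t \<le> \<tau>" for t
    using that assms Cl_pos alpha_pos hinv_pos[of "1/t"] unfolding K_def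
    by (intro nn_integral_le_near_far_majorant[where R = "hinv \<nu> (1/t)"] gtilde_le_near_far_majorant)
       auto
  then show ?thesis
    by blast
qed

end

theorem corollary2p7:
  fixes \<nu> :: "real \<Rightarrow> real" and \<eta>4 \<alpha> \<beta> Cl Cu \<epsilon> \<tau> :: real and d :: nat
  assumes levy: "levy_density \<nu>"
    and eta: "0 < \<eta>4"
    and C1: "\<exists>\<nu>'. continuous_on {0<..<\<eta>4} \<nu>' \<and>
               (\<forall>x\<in>{0<..<\<eta>4}. (\<nu> has_real_derivative \<nu>' x) (at x) \<and> \<nu>' x < 0) \<and>
               (\<forall>x\<in>{0<..<\<eta>4}. \<forall>y\<in>{0<..<\<eta>4}. x \<le> y \<longrightarrow> - \<nu>' y / y \<le> - \<nu>' x / x)"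
    and ab: "0 < \<alpha>" "\<alpha> \<le> \<beta>" "\<beta> < 2"
    and Cpos: "0 < Cl" "0 < Cu"
    and lower: "\<And>lam \<theta>. 1 \<le> lam \<Longrightarrow> 0 \<le> \<theta> \<Longrightarrow> psi \<nu> (lam * \<theta>) \<ge> Cl * lam powr \<alpha> * psi \<nu> \<theta>"
    and upper: "\<And>lam \<theta>. 1 \<le> lam \<Longrightarrow> 1 \<le> \<theta> \<Longrightarrow> psi \<nu> (lam * \<theta>) \<le> Cu * lam powr \<beta> * psi \<nu> \<theta>"
    and d: "2 \<le> d"
    and eps: "0 < \<epsilon>" "\<epsilon> \<le> 1"
    and tau: "0 < \<tau>"
  shows "(\<exists>c. \<forall>t. 0 < t \<and> t \<le> \<tau> \<longrightarrow>
            (\<integral>\<^sup>+ x. ennreal (gtilde \<nu> d \<alpha> \<beta> \<tau> \<epsilon> t x) \<partial>lborel) \<le> ennreal c)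
       \<and> (\<forall>a>0. ((\<lambda>t. \<integral>\<^sup>+ x\<in>{x. a < \<bar>x\<bar>}. ennreal (gtilde \<nu> d \<alpha> \<beta> \<tau> \<epsilon> t x) \<partial>lborel)
                   \<longlongrightarrow> 0) (at_right 0))"
proof -
  (* Of d and beta only the positivity of (d + beta - 1)/alpha matters. *)
  interpret levy_measure_density \<nu>
    using levy by unfold_locales (auto simp: levy_density_def)
  obtain \<nu>' where "\<forall>x\<in>{0<..<\<eta>4}. (\<nu> has_real_derivative \<nu>' x) (at x) \<and> \<nu>' x < 0"
    using C1 by blast
  then interpret levy_lower_scaling \<nu> Cl \<alpha> \<eta>4
    using Cpos ab eta lower density_nonneg by unfold_locales (auto intro: density_pos_of_deriv_neg)
  have "0 < (real d + \<beta> - 1) / \<alpha>"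
    using ab d by simp
  then show ?thesis
    using gtilde_nn_integral_bounded gtilde_tail_tendsto_0 eps by auto
qed

end
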